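(* Consider a two-player perfect-information game with exact Enforceable Payoff Frontiers $U_s$, minimum required incentives $\tau$, truncation thresholds $\beta$ and bounds $\underline V,\overline V$ as defined in the context. Let $\{\tilde U_s\}_{s\in\mathcal S}$ be any family of learned EPFs as in the context, and let $\tilde\pi$ be the strategy induced by $\{\tilde U_s\}$. Then $\tilde\pi$ is incentive compatible in the following sense. Let $s\in\mathcal S_2$ be a follower state reached with some promise, and let $a\in\mathcal A(s)$ be an action that $\tilde\pi$ recommends at $s$ with positive probability, carrying promise $\mu'$ to the child $T(a;s)$. Then the follower's expected payoff from $T(a;s)$ onward when play continues according to $\tilde\pi$ with promise $\mu'$ is at least $\tau(T(a;s))$.
   Context: A two-player perfect-information game is a finite rooted tree whose vertices are the states $s\in\mathcal S$. The leaves $\mathcal L\subseteq\mathcal S$ carry payoffs $r_1(\ell),r_2(\ell)\in\mathbb R$ for player $\mathsf P_1$ (the leader) and player $\mathsf P_2$ (the follower). Every non-leaf state belongs to exactly one of $\mathcal S_1$ (leader states) or $\mathcal S_2$ (follower states). The actions $\mathcal A(s)$ at $s$ are the edges from $s$ to its children; $\mathcal C(s)$ is the set of children and $T(a;s)$ is the child reached by action $a$. Define $\underline V,\overline V:\mathcal S\to\mathbb R$ by backward induction (they are the follower's payoffs under the leader's grim strategy and under the joint altruistic strategy): - for a leaf $\ell$: $\underline V(\ell)=\overline V(\ell)=r_2(\ell)$; - for $s\in\mathcal S_1$: $\underline V(s)=\min_{s'\in\mathcal C(s)}\underline V(s')$; - for $s\in\mathcal S_2$: $\underline V(s)=\max_{s'\in\mathcal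 C(s)}\underline V(s')$; - for every non-leaf $s$: $\overline V(s)=\max_{s'\in\mathcal C(s)}\overline V(s')$. For $s\in\mathcal S_2$ and $s'\in\mathcal C(s)$, the minimum required incentive is $\tau(s')=\max_{s^!\in\mathcal C(s),\,s^!\neq s'}\underline V(s^!)$. Let $\beta(s')=\tau(s')$ if the parent of $s'$ lies in $\mathcal S_2$, and $\beta(s')=-\infty$ if the parent lies in $\mathcal S_1$. For functions $g:\mathbb R\to\mathbb R\cup\{-\infty\}$: - the upper concave envelope $\bigwedge_i g_i$ of finitely many such functions is the pointwise infimum of all concave $h$ with $h\ge\max_i g_i$; - the left truncation is $[g\triangleright t](\mu)=g(\mu)$ if $\mu\ge t$ and $-\infty$ otherwise (so $g\triangleright(-\infty)=g$). Exact EPFs: for a leaf $\ell$, $U_\ell(\mu)=r_1(\ell)$ if $\mu=r_2(\ell)$ and $-\infty$ otherwise; for a non-leaf $s$, $U_s=\bigwedge_{s'\in\mathcal C(s)}(U_{s'}\triangleright\beta(s'))$. Learned EPFs: a family $\{\tilde U_s\}_{s\in\mathcal S}$ with $\tilde U_\ell=U_\ell$ for leaves. For each non-leaf $s$, $\tilde U_s$ is a piecewise linear function, given as the linear interpolation of finitely many points whose $x$-coordinates lie in $[\underline V(s),\overline V(s)]$ and include both endpoints. It is real-valued on $[\underline V(s),\overline V(s)]$ and equal to $-\infty$ outside this interval. Induced strategy $\tilde\pi$: play starts at the root with promise $\mu_{\mathrm{root}}\in\arg\max_\mu\tilde U_{\mathrm{root}}(\mu)$. At a non-leaf state $s$ reached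 with promise $\mu$, choose a maximizer $(s',s'',t,\mu',\mu'')$, subject to $s',s''\in\mathcal C(s)$, $t\in[0,1]$ and $t\mu'+(1-t)\mu''=\mu$, of $$t\,[\tilde U_{s'}\triangleright\beta(s')](\mu')+(1-t)\,[\tilde U_{s''}\triangleright\beta(s'')](\mu'').$$ Then move to $s'$ with probability $t$ carrying promise $\mu'$, and to $s''$ with probability $1-t$ carrying promise $\mu''$. At leader states this is the leader's mixed action; at follower states it is the action the leader recommends to the follower, who follows recommendations. *)

theory Defs
  imports Complex_Main "HOL-Library.Extended_Real"
begin

text \<open>A leaf carries the payoffs (r1, r2) of the leader P1
  and the follower P2. An inner node is owned by the leader or the follower and has an
  (ordered) list of children; the actions at a node are the indices into this list.
  States of a game g are identified with paths (lists of action indices) from the root,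
  so that every non-root state has a unique parent (the path without its last index).\<close>

datatype player = Leader | Follower

datatype game = Leaf real real | Node player "game list"

fun wf_game :: "game \<Rightarrow> bool" where
  "wf_game (Leaf r1 r2) = True"
| "wf_game (Node pl cs) = (cs \<noteq> [] \<and> (\<forall>c\<in>set cs. wf_game c))"

fun sub :: "game \<Rightarrow> nat list \<Rightarrow> game option" where
  "sub g [] = Some g"
| "sub (Leaf r1 r2) (i # p) = None"
| "sub (Node pl cs) (i # p) = (if i < length cs then sub (cs ! i) p else None)"

fun Vlow :: "game \<Rightarrow> real" where
  "Vlow (Leaf r1 r2) = r2"
| "Vlow (Node pl cs) =
     (if pl = Leader then Min (set (map Vlow cs)) else Max (set (map Vlow cs)))"

fun Vup :: "game \<Rightarrow> real" where
  "Vup (Leaf r1 r2) = r2"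
| "Vup (Node pl cs) = Max (set (map Vup cs))"

text \<open>For a follower node with children cs, the minimum required incentive of child i is
  the maximum of Vlow over the other children (the maximum of the empty set being -\<infinity>).\<close>
definition tau :: "game list \<Rightarrow> nat \<Rightarrow> ereal" where
  "tau cs i = (SUP j\<in>{j. j < length cs \<and> j \<noteq> i}. ereal (Vlow (cs ! j)))"

definition beta :: "player \<Rightarrow> game list \<Rightarrow> nat \<Rightarrow> ereal" where
  "beta pl cs i = (if pl = Follower then tau cs i else -\<infinity>)"

definition trunc :: "(real \<Rightarrow> ereal) \<Rightarrow> ereal \<Rightarrow> real \<Rightarrow> ereal" where
  "trunc f t \<mu> = (if t \<le> ereal \<mu> then f \<mu> else -\<infinity>)"

definition pl_interp :: "real \<Rightarrow> real \<Rightarrow> (real \<Rightarrow> ereal) \<Rightarrow> bool" where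
  "pl_interp a b f \<longleftrightarrow>
     (\<exists>xs ys :: real list.
        xs \<noteq> [] \<and> length ys = length xs \<and> sorted_wrt (<) xs \<and>
        hd xs = a \<and> last xs = b \<and>
        f a = ereal (hd ys) \<and>
        (\<forall>k. Suc k < length xs \<longrightarrow>
           (\<forall>\<mu>. xs ! k \<le> \<mu> \<and> \<mu> \<le> xs ! Suc k \<longrightarrow>
              f \<mu> = ereal (ys ! k + (\<mu> - xs ! k) / (xs ! Suc k - xs ! k) * (ys ! Suc k - ys ! k)))) \<and>
        (\<forall>\<mu>. \<mu> < a \<or> b < \<mu> \<longrightarrow> f \<mu> = -\<infinity>))"

definition learned_EPFs :: "game \<Rightarrow> (nat list \<Rightarrow> real \<Rightarrow> ereal) \<Rightarrow> bool" where
  "learned_EPFs g U \<longleftrightarrow>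
     (\<forall>p g'. sub g p = Some g' \<longrightarrow>
        (case g' of
           Leaf r1 r2 \<Rightarrow> U p = (\<lambda>\<mu>. if \<mu> = r2 then ereal r1 else -\<infinity>)
         | Node pl cs \<Rightarrow> pl_interp (Vlow g') (Vup g') (U p)))"

text \<open>A (memoryless in state and promise) choice rule: at state p with promise \<mu> it
  returns (i, j, t, \<mu>1, \<mu>2): go to child i with probability t carrying promise \<mu>1 and to
  child j with probability 1 - t carrying promise \<mu>2.\<close>
type_synonym strategy = "nat list \<Rightarrow> real \<Rightarrow> nat \<times> nat \<times> real \<times> real \<times> real"

definition objective ::
  "(nat list \<Rightarrow> real \<Rightarrow> ereal) \<Rightarrow> nat list \<Rightarrow> player \<Rightarrow> game list \<Rightarrow>
   nat \<times> nat \<times> real \<times> real \<times> real \<Rightarrow> ereal" where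
  "objective U p pl cs c = (case c of (i, j, t, \<mu>1, \<mu>2) \<Rightarrow>
      ereal t * trunc (U (p @ [i])) (beta pl cs i) \<mu>1
      + ereal (1 - t) * trunc (U (p @ [j])) (beta pl cs j) \<mu>2)"

definition feasible :: "game list \<Rightarrow> real \<Rightarrow> nat \<times> nat \<times> real \<times> real \<times> real \<Rightarrow> bool" where
  "feasible cs \<mu> c = (case c of (i, j, t, \<mu>1, \<mu>2) \<Rightarrow>
      i < length cs \<and> j < length cs \<and> 0 \<le> t \<and> t \<le> 1 \<and> t * \<mu>1 + (1 - t) * \<mu>2 = \<mu>)"

definition is_maximizer ::
  "(nat list \<Rightarrow> real \<Rightarrow> ereal) \<Rightarrow> nat list \<Rightarrow> player \<Rightarrow> game list \<Rightarrow> real \<Rightarrow>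
   nat \<times> nat \<times> real \<times> real \<times> real \<Rightarrow> bool" where
  "is_maximizer U p pl cs \<mu> c \<longleftrightarrow>
     feasible cs \<mu> c \<and> (\<forall>c'. feasible cs \<mu> c' \<longrightarrow> objective U p pl cs c' \<le> objective U p pl cs c)"

text \<open>(State, promise) pairs reached with positive probability when play starts at the
  root with promise \<mu>0 and follows the choice rule \<sigma>.\<close>
inductive reached :: "game \<Rightarrow> strategy \<Rightarrow> real \<Rightarrow> nat list \<Rightarrow> real \<Rightarrow> bool"
  for g \<sigma> \<mu>0 where
  root: "reached g \<sigma> \<mu>0 [] \<mu>0"
| left: "reached g \<sigma> \<mu>0 p \<mu> \<Longrightarrow> sub g p = Some (Node pl cs) \<Longrightarrow>
         \<sigma> p \<mu> = (i, j, t, \<mu>1, \<mu>2) \<Longrightarrow> 0 < t \<Longrightarrow> reached g \<sigma> \<mu>0 (p @ [i]) \<mu>1"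
| right: "reached g \<sigma> \<mu>0 p \<mu> \<Longrightarrow> sub g p = Some (Node pl cs) \<Longrightarrow>
         \<sigma> p \<mu> = (i, j, t, \<mu>1, \<mu>2) \<Longrightarrow> t < 1 \<Longrightarrow> reached g \<sigma> \<mu>0 (p @ [j]) \<mu>2"

definition induced_by :: "game \<Rightarrow> (nat list \<Rightarrow> real \<Rightarrow> ereal) \<Rightarrow> real \<Rightarrow> strategy \<Rightarrow> bool" where
  "induced_by g U \<mu>0 \<sigma> \<longleftrightarrow>
     (\<forall>\<mu>. U [] \<mu> \<le> U [] \<mu>0) \<and>
     (\<forall>p \<mu> pl cs. reached g \<sigma> \<mu>0 p \<mu> \<longrightarrow> sub g p = Some (Node pl cs) \<longrightarrow>
        is_maximizer U p pl cs \<mu> (\<sigma> p \<mu>))"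

function pay2 :: "game \<Rightarrow> strategy \<Rightarrow> nat list \<Rightarrow> real \<Rightarrow> real" where
  "pay2 (Leaf r1 r2) \<sigma> p \<mu> = r2"
| "pay2 (Node pl cs) \<sigma> p \<mu> =
     (let (i, j, t, \<mu>1, \<mu>2) = \<sigma> p \<mu> in
        (if i < length cs then t * pay2 (cs ! i) \<sigma> (p @ [i]) \<mu>1 else 0)
      + (if j < length cs then (1 - t) * pay2 (cs ! j) \<sigma> (p @ [j]) \<mu>2 else 0))"
  by pat_completeness auto
termination
  by (relation "measure (\<lambda>(h, \<sigma>, p, \<mu>). size h)")
     (auto intro!: le_imp_less_Suc size_list_estimation' nth_mem)

end

theory Submission
  imports Defs
begin

(* At a reached state with promise \<mu> in [Vlow, Vup], mixing the child that
   attains Vlow with the child that attains Vup gives a feasible choice of finite value, since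
   every threshold \<beta> is at most Vlow of the node. Hence the maximizer chosen by the strategy is
   finite too, so every branch it takes with positive probability passes its truncation
   (\<mu>' \<ge> \<beta>) and lands in the child's interval [Vlow, Vup]. By induction on the subgame the
   follower's expected payoff then equals the promise, which at follower states is \<ge> \<beta> = \<tau>. *)

lemma nth_consecutive_bracket:
  fixes xs :: "'a::linorder list"
  assumes "xs \<noteq> []" "hd xs \<le> x" "x \<le> last xs"
  shows "x = hd xs \<or> (\<exists>k. Suc k < length xs \<and> xs ! k \<le> x \<and> x \<le> xs ! Suc k)"
  using assms
proof (induction xs)
  case (Cons a rest)
  consider "rest = []" | "rest \<noteq> []" "x \<le> hd rest" | "rest \<noteq> []" "hd rest < x"
    by fastforce
  then show ?case
  proof cases
    case 1
    then show ?thesis using Cons.prems by simp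
  next
    case 2
    then show ?thesis using Cons.prems by (intro disjI2 exI[of _ 0]) (auto simp: hd_conv_nth)
  next
    case 3
    then have "x = hd rest \<or> (\<exists>k. Suc k < length rest \<and> rest ! k \<le> x \<and> x \<le> rest ! Suc k)"
      using Cons by auto
    then obtain k where "Suc k < length rest" "rest ! k \<le> x" "x \<le> rest ! Suc k"
      using 3 by auto
    then show ?thesis by (intro disjI2 exI[of _ "Suc k"]) auto
  qed
qed simp

lemma ereal_convex_comb_neq_minf:
  fixes A B :: ereal
  assumes "0 \<le> t" "t \<le> 1" "A \<noteq> \<infinity>" "B \<noteq> \<infinity>" "ereal t * A + ereal (1 - t) * B \<noteq> -\<infinity>"
  shows "0 < t \<Longrightarrow> A \<noteq> -\<infinity>" and "t < 1 \<Longrightarrow> B \<noteq> -\<infinity>"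
  using assms by (cases A; cases B; auto split: if_splits)+

lemma between_convex_combination:
  fixes x y z :: real
  assumes "x \<le> z" "z \<le> y"
  obtains t where "0 \<le> t" "t \<le> 1" "t * x + (1 - t) * y = z"
proof (cases "x = y")
  case True then show ?thesis using that[of 1] assms by auto
next
  case False
  then have "x < y" using assms by auto
  define t where "t = (y - z) / (y - x)"
  have "t * (y - x) = y - z" using \<open>x < y\<close> by (simp add: t_def)
  then have "t * x + (1 - t) * y = z" by (simp add: algebra_simps)
  moreover have "0 \<le> t" "t \<le> 1" using assms \<open>x < y\<close> by (auto simp: t_def)
  ultimately show ?thesis using that by blast
qed

lemma sub_append: "sub g (p @ q) = (case sub g p of None \<Rightarrow> None | Some h \<Rightarrow> sub h q)"
proof (induction p arbitrary: g)
  case (Cons a p)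
  then show ?case by (cases g) auto
qed simp

lemma sub_snoc_child:
  "sub g p = Some (Node pl cs) \<Longrightarrow> i < length cs \<Longrightarrow> sub g (p @ [i]) = Some (cs ! i)"
  by (simp add: sub_append)

lemma wf_game_sub: "wf_game g \<Longrightarrow> sub g p = Some h \<Longrightarrow> wf_game h"
proof (induction p arbitrary: g)
  case (Cons a p)
  then show ?case by (cases g) (auto split: if_splits intro: nth_mem)
qed simp

lemma Vlow_attained: "cs \<noteq> [] \<Longrightarrow> \<exists>k<length cs. Vlow (cs ! k) = Vlow (Node pl cs)"
proof -
  assume "cs \<noteq> []"
  then have "Vlow (Node pl cs) \<in> set (map Vlow cs)"
    by (auto intro: Min_in Max_in)
  then show ?thesis by (auto simp: in_set_conv_nth)
qed

lemma Vup_attained: "cs \<noteq> [] \<Longrightarrow> \<exists>k<length cs. Vup (cs ! k) = Vup (Node pl cs)"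
proof -
  assume "cs \<noteq> []"
  then have "Vup (Node pl cs) \<in> set (map Vup cs)"
    by (auto intro: Max_in)
  then show ?thesis by (auto simp: in_set_conv_nth)
qed

lemma Vlow_le_Vup: "wf_game h \<Longrightarrow> Vlow h \<le> Vup h"
proof (induction h)
  case (Node pl cs)
  then obtain k where k: "k < length cs" "Vlow (cs ! k) = Vlow (Node pl cs)"
    using Vlow_attained[of cs pl] by auto
  have "Vlow (cs ! k) \<le> Vup (cs ! k)"
    using Node.IH[of "cs ! k"] Node.prems k(1) by simp
  also have "\<dots> \<le> Vup (Node pl cs)"
    using k(1) by auto
  finally show ?case using k(2) by simp
qed simp

lemma beta_le_Vlow: "cs \<noteq> [] \<Longrightarrow> beta pl cs k \<le> ereal (Vlow (Node pl cs))"
  unfolding beta_def tau_def by (auto intro!: SUP_least Max_ge)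

lemma pl_interp_outside: "pl_interp a b f \<Longrightarrow> \<mu> < a \<or> b < \<mu> \<Longrightarrow> f \<mu> = -\<infinity>"
  unfolding pl_interp_def by blast

lemma pl_interp_real:
  assumes "pl_interp a b f" "a \<le> \<mu>" "\<mu> \<le> b"
  shows "\<exists>r. f \<mu> = ereal r"
proof -
  obtain xs ys where xs: "xs \<noteq> []" "hd xs = a" "last xs = b" "f a = ereal (hd ys)"
    and segment: "\<And>k \<mu>. Suc k < length xs \<Longrightarrow> xs ! k \<le> \<mu> \<Longrightarrow> \<mu> \<le> xs ! Suc k \<Longrightarrow>
      f \<mu> = ereal (ys ! k + (\<mu> - xs ! k) / (xs ! Suc k - xs ! k) * (ys ! Suc k - ys ! k))"
    using assms(1) unfolding pl_interp_def by blast
  consider "\<mu> = a" | k where "Suc k < length xs" "xs ! k \<le> \<mu>" "\<mu> \<le> xs ! Suc k"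
    using nth_consecutive_bracket[of xs \<mu>] xs(1-3) assms(2,3) by blast
  then show ?thesis
    by cases (use xs(4) segment in blast)+
qed

lemma learned_EPFs_finite:
  assumes "learned_EPFs g U" "sub g p = Some h"
  shows "U p \<mu> \<noteq> -\<infinity> \<longleftrightarrow> Vlow h \<le> \<mu> \<and> \<mu> \<le> Vup h" and "U p \<mu> \<noteq> \<infinity>"
proof (atomize (full), cases h)
  case (Leaf r1 r2)
  then have "U p = (\<lambda>\<mu>. if \<mu> = r2 then ereal r1 else -\<infinity>)"
    using assms unfolding learned_EPFs_def by force
  then show "(U p \<mu> \<noteq> -\<infinity> \<longleftrightarrow> Vlow h \<le> \<mu> \<and> \<mu> \<le> Vup h) \<and> U p \<mu> \<noteq> \<infinity>"
    using Leaf by auto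
next
  case (Node pl cs)
  then have "pl_interp (Vlow h) (Vup h) (U p)"
    using assms unfolding learned_EPFs_def by force
  then show "(U p \<mu> \<noteq> -\<infinity> \<longleftrightarrow> Vlow h \<le> \<mu> \<and> \<mu> \<le> Vup h) \<and> U p \<mu> \<noteq> \<infinity>"
    using pl_interp_real[of "Vlow h" "Vup h" "U p" \<mu>] pl_interp_outside[of "Vlow h" "Vup h" "U p" \<mu>]
    by (cases "Vlow h \<le> \<mu> \<and> \<mu> \<le> Vup h") auto
qed

lemma trunc_neq_minf_iff: "trunc f t \<mu> \<noteq> -\<infinity> \<longleftrightarrow> t \<le> ereal \<mu> \<and> f \<mu> \<noteq> -\<infinity>"
  by (simp add: trunc_def)

lemma trunc_neq_pinf: "f \<mu> \<noteq> \<infinity> \<Longrightarrow> trunc f t \<mu> \<noteq> \<infinity>"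
  by (simp add: trunc_def)

definition moves_to :: "nat \<times> nat \<times> real \<times> real \<times> real \<Rightarrow> nat \<Rightarrow> real \<Rightarrow> bool" where
  "moves_to c k \<mu>' \<longleftrightarrow> (case c of (i, j, t, \<mu>1, \<mu>2) \<Rightarrow>
     (0 < t \<and> k = i \<and> \<mu>' = \<mu>1) \<or> (t < 1 \<and> k = j \<and> \<mu>' = \<mu>2))"

lemma reached_moves_to:
  "reached g \<sigma> \<mu>0 p \<mu> \<Longrightarrow> sub g p = Some (Node pl cs) \<Longrightarrow> moves_to (\<sigma> p \<mu>) k \<mu>' \<Longrightarrow>
   reached g \<sigma> \<mu>0 (p @ [k]) \<mu>'"
  unfolding moves_to_def by (auto split: prod.splits intro: reached.left reached.right)

lemma reached_moves_to_induct[consumes 1, case_names root step]: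
  assumes "reached g \<sigma> \<mu>0 p \<mu>"
    and "P [] \<mu>0"
    and "\<And>p \<mu> pl cs k \<mu>'. reached g \<sigma> \<mu>0 p \<mu> \<Longrightarrow> P p \<mu> \<Longrightarrow> sub g p = Some (Node pl cs) \<Longrightarrow>
           moves_to (\<sigma> p \<mu>) k \<mu>' \<Longrightarrow> P (p @ [k]) \<mu>'"
  shows "P p \<mu>"
  using assms(1)
proof (induction rule: reached.induct)
  case (left p \<mu> pl cs i j t \<mu>1 \<mu>2)
  then show ?case using assms(3) by (auto simp: moves_to_def)
next
  case (right p \<mu> pl cs i j t \<mu>1 \<mu>2)
  then show ?case using assms(3) by (auto simp: moves_to_def)
qed (rule assms(2))

lemma exists_feasible_objective_neq_minf:
  assumes wf: "wf_game g" and L: "learned_EPFs g U" and sp: "sub g p = Some (Node pl cs)"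
    and bounds: "Vlow (Node pl cs) \<le> \<mu>" "\<mu> \<le> Vup (Node pl cs)"
  shows "\<exists>c. feasible cs \<mu> c \<and> objective U p pl cs c \<noteq> -\<infinity>"
proof -
  have "cs \<noteq> []" using wf_game_sub[OF wf sp] by simp
  obtain k1 where k1: "k1 < length cs" "Vlow (cs ! k1) = Vlow (Node pl cs)"
    using Vlow_attained[OF \<open>cs \<noteq> []\<close>] by blast
  obtain k2 where k2: "k2 < length cs" "Vup (cs ! k2) = Vup (Node pl cs)"
    using Vup_attained[OF \<open>cs \<noteq> []\<close>] by blast
  have real_value: "\<exists>r. trunc (U (p @ [k])) (beta pl cs k) x = ereal r"
    if "k < length cs" "beta pl cs k \<le> ereal x" "Vlow (cs ! k) \<le> x" "x \<le> Vup (cs ! k)" for k x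
  proof -
    note child = sub_snoc_child[OF sp \<open>k < length cs\<close>]
    have "trunc (U (p @ [k])) (beta pl cs k) x \<noteq> -\<infinity>"
      using that learned_EPFs_finite(1)[OF L child] by (simp add: trunc_neq_minf_iff)
    moreover have "trunc (U (p @ [k])) (beta pl cs k) x \<noteq> \<infinity>"
      using learned_EPFs_finite(2)[OF L child] by (rule trunc_neq_pinf)
    ultimately show ?thesis by (cases "trunc (U (p @ [k])) (beta pl cs k) x") auto
  qed
  have wf_child: "wf_game (cs ! k)" if "k < length cs" for k
    using wf_game_sub[OF wf sub_snoc_child[OF sp that]] .
  have "beta pl cs k1 \<le> ereal (Vlow (cs ! k1))"
    using beta_le_Vlow[OF \<open>cs \<noteq> []\<close>] k1(2) by simp
  then obtain a1 where a1: "trunc (U (p @ [k1])) (beta pl cs k1) (Vlow (cs ! k1)) = ereal a1"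
    using real_value[OF k1(1)] Vlow_le_Vup[OF wf_child[OF k1(1)]] by blast
  have "ereal (Vlow (Node pl cs)) \<le> ereal (Vup (cs ! k2))"
    using bounds k2(2) by simp
  then have "beta pl cs k2 \<le> ereal (Vup (cs ! k2))"
    using beta_le_Vlow[OF \<open>cs \<noteq> []\<close>] by (rule order_trans[rotated])
  then obtain a2 where a2: "trunc (U (p @ [k2])) (beta pl cs k2) (Vup (cs ! k2)) = ereal a2"
    using real_value[OF k2(1)] Vlow_le_Vup[OF wf_child[OF k2(1)]] by blast
  obtain t where t: "0 \<le> t" "t \<le> 1" "t * Vlow (cs ! k1) + (1 - t) * Vup (cs ! k2) = \<mu>"
    using between_convex_combination bounds k1(2) k2(2) by metis
  have "feasible cs \<mu> (k1, k2, t, Vlow (cs ! k1), Vup (cs ! k2))"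
    using t k1(1) k2(1) by (simp add: feasible_def)
  moreover have "objective U p pl cs (k1, k2, t, Vlow (cs ! k1), Vup (cs ! k2)) \<noteq> -\<infinity>"
    using a1 a2 by (simp add: objective_def)
  ultimately show ?thesis by blast
qed

lemma maximizer_moves_to_admissible:
  assumes wf: "wf_game g" and L: "learned_EPFs g U" and sp: "sub g p = Some (Node pl cs)"
    and bounds: "Vlow (Node pl cs) \<le> \<mu>" "\<mu> \<le> Vup (Node pl cs)"
    and maximizer: "is_maximizer U p pl cs \<mu> c" and move: "moves_to c k \<mu>'"
  shows "k < length cs \<and> beta pl cs k \<le> ereal \<mu>' \<and> Vlow (cs ! k) \<le> \<mu>' \<and> \<mu>' \<le> Vup (cs ! k)"
proof -
  obtain i j t \<mu>1 \<mu>2 where c: "c = (i, j, t, \<mu>1, \<mu>2)" by (cases c) auto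
  obtain c' where "feasible cs \<mu> c'" "objective U p pl cs c' \<noteq> -\<infinity>"
    using exists_feasible_objective_neq_minf[OF wf L sp bounds] by blast
  then have obj: "objective U p pl cs c \<noteq> -\<infinity>"
    using maximizer unfolding is_maximizer_def by fastforce
  have feas: "i < length cs" "j < length cs" "0 \<le> t" "t \<le> 1"
    using maximizer c by (auto simp: is_maximizer_def feasible_def)
  have not_pinf: "trunc (U (p @ [k'])) (beta pl cs k') x \<noteq> \<infinity>" if "k' < length cs" for k' x
    using learned_EPFs_finite(2)[OF L sub_snoc_child[OF sp that]] by (rule trunc_neq_pinf)
  have "ereal t * trunc (U (p @ [i])) (beta pl cs i) \<mu>1
      + ereal (1 - t) * trunc (U (p @ [j])) (beta pl cs j) \<mu>2 \<noteq> -\<infinity>"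
    using obj by (simp add: c objective_def)
  note positive_weight_finite =
    ereal_convex_comb_neq_minf[OF feas(3,4) not_pinf[OF feas(1)] not_pinf[OF feas(2)] this]
  have "(0 < t \<and> k = i \<and> \<mu>' = \<mu>1) \<or> (t < 1 \<and> k = j \<and> \<mu>' = \<mu>2)"
    using move by (simp add: c moves_to_def)
  then have "k < length cs \<and> trunc (U (p @ [k])) (beta pl cs k) \<mu>' \<noteq> -\<infinity>"
    using positive_weight_finite feas(1,2) by blast
  then show ?thesis
    using learned_EPFs_finite(1)[OF L sub_snoc_child[OF sp]] by (auto simp: trunc_neq_minf_iff)
qed

lemma reached_promise_bounds:
  assumes wf: "wf_game g" and L: "learned_EPFs g U" and I: "induced_by g U \<mu>0 \<sigma>"
    and reached: "reached g \<sigma> \<mu>0 p \<mu>"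
  shows "\<exists>h. sub g p = Some h \<and> Vlow h \<le> \<mu> \<and> \<mu> \<le> Vup h"
  using reached
proof (induction rule: reached_moves_to_induct)
  case root
  have "U [] (Vlow g) \<noteq> -\<infinity>"
    using learned_EPFs_finite(1)[OF L, of "[]" g] Vlow_le_Vup[OF wf] by simp
  moreover have "U [] (Vlow g) \<le> U [] \<mu>0"
    using I by (simp add: induced_by_def)
  ultimately have "U [] \<mu>0 \<noteq> -\<infinity>" by auto
  then show ?case using learned_EPFs_finite(1)[OF L, of "[]" g] by simp
next
  case (step p \<mu> pl cs k \<mu>')
  have "is_maximizer U p pl cs \<mu> (\<sigma> p \<mu>)"
    using I step.hyps(1,2) by (simp add: induced_by_def)
  then show ?case
    using maximizer_moves_to_admissible[OF wf L step.hyps(2) _ _ _ step.hyps(3)]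
      step.IH step.hyps(2) sub_snoc_child[OF step.hyps(2)] by auto
qed

lemma pay2_eq_promise:
  assumes wf: "wf_game g" and L: "learned_EPFs g U" and I: "induced_by g U \<mu>0 \<sigma>"
  shows "reached g \<sigma> \<mu>0 p \<mu> \<Longrightarrow> sub g p = Some h \<Longrightarrow> pay2 h \<sigma> p \<mu> = \<mu>"
proof (induction h arbitrary: p \<mu>)
  case (Leaf r1 r2)
  then show ?case using reached_promise_bounds[OF wf L I Leaf(1)] by auto
next
  case (Node pl cs)
  obtain i j t \<mu>1 \<mu>2 where \<sigma>: "\<sigma> p \<mu> = (i, j, t, \<mu>1, \<mu>2)" by (cases "\<sigma> p \<mu>") auto
  have "is_maximizer U p pl cs \<mu> (\<sigma> p \<mu>)"
    using I Node.prems by (simp add: induced_by_def)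
  then have feas: "i < length cs" "j < length cs" "0 \<le> t" "t \<le> 1" "t * \<mu>1 + (1 - t) * \<mu>2 = \<mu>"
    using \<sigma> by (auto simp: is_maximizer_def feasible_def)
  have branch: "pay2 (cs ! k) \<sigma> (p @ [k]) \<mu>' = \<mu>'"
    if "moves_to (\<sigma> p \<mu>) k \<mu>'" "k < length cs" for k \<mu>'
    using Node.IH[OF nth_mem[OF that(2)] reached_moves_to[OF Node.prems that(1)]]
      sub_snoc_child[OF Node.prems(2) that(2)] .
  have left: "t * pay2 (cs ! i) \<sigma> (p @ [i]) \<mu>1 = t * \<mu>1"
    using branch[of i \<mu>1] feas(1,3) \<sigma> by (cases "t = 0") (auto simp: moves_to_def)
  have right: "(1 - t) * pay2 (cs ! j) \<sigma> (p @ [j]) \<mu>2 = (1 - t) * \<mu>2"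
    using branch[of j \<mu>2] feas(2,4) \<sigma> by (cases "t = 1") (auto simp: moves_to_def)
  have "pay2 (Node pl cs) \<sigma> p \<mu>
      = t * pay2 (cs ! i) \<sigma> (p @ [i]) \<mu>1 + (1 - t) * pay2 (cs ! j) \<sigma> (p @ [j]) \<mu>2"
    using \<sigma> feas(1,2) by simp
  also have "\<dots> = t * \<mu>1 + (1 - t) * \<mu>2"
    using left right by (rule arg_cong2[where f = "(+)"])
  finally show ?case
    using feas(5) by simp
qed

lemma pay2_moves_to_ge_beta:
  assumes wf: "wf_game g" and L: "learned_EPFs g U" and I: "induced_by g U \<mu>0 \<sigma>"
    and reached: "reached g \<sigma> \<mu>0 p \<mu>" and sp: "sub g p = Some (Node pl cs)"
    and move: "moves_to (\<sigma> p \<mu>) k \<mu>'"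
  shows "beta pl cs k \<le> ereal (pay2 (cs ! k) \<sigma> (p @ [k]) \<mu>')"
proof -
  have "is_maximizer U p pl cs \<mu> (\<sigma> p \<mu>)"
    using I reached sp by (simp add: induced_by_def)
  moreover have "Vlow (Node pl cs) \<le> \<mu>" "\<mu> \<le> Vup (Node pl cs)"
    using reached_promise_bounds[OF wf L I reached] sp by auto
  ultimately have "k < length cs" "beta pl cs k \<le> ereal \<mu>'"
    using maximizer_moves_to_admissible[OF wf L sp _ _ _ move] by auto
  moreover have "pay2 (cs ! k) \<sigma> (p @ [k]) \<mu>' = \<mu>'"
    using pay2_eq_promise[OF wf L I reached_moves_to[OF reached sp move]]
      sub_snoc_child[OF sp \<open>k < length cs\<close>] .
  ultimately show ?thesis by simp
qed

theorem theorem2: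
  fixes g :: game and U :: "nat list \<Rightarrow> real \<Rightarrow> ereal"
    and \<mu>0 :: real and \<sigma> :: strategy
  assumes "wf_game g"
    and "learned_EPFs g U"
    and "induced_by g U \<mu>0 \<sigma>"
    and "reached g \<sigma> \<mu>0 p \<mu>"
    and "sub g p = Some (Node Follower cs)"
    and "\<sigma> p \<mu> = (i, j, t, \<mu>1, \<mu>2)"
  shows "(0 < t \<longrightarrow> ereal (pay2 (cs ! i) \<sigma> (p @ [i]) \<mu>1) \<ge> tau cs i)
       \<and> (t < 1 \<longrightarrow> ereal (pay2 (cs ! j) \<sigma> (p @ [j]) \<mu>2) \<ge> tau cs j)"
  using pay2_moves_to_ge_beta[OF assms(1-5)] assms(6) by (simp add: beta_def moves_to_def)

end
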